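(* Let $p$ be the POP of size $3$ on $\{1,2,3\}$ whose only relation is $3<_p2$ (so $1$ is isolated), and let $p'$ be the POP of size $3$ whose only relation is $2<_{p'}3$. Then $p\sim_s p'$. Equivalently, the set of classical patterns $\{132,231,321\}$ is shape-Wilf-equivalent to the set $\{123,213,312\}$: for every Ferrers board $\lambda$, the number of transversals of $\lambda$ avoiding all of $132,231,321$ equals the number of transversals avoiding all of $123,213,312$.
   Context: A partially ordered pattern (POP) $p$ of size $m$ is a partial order $\le_p$ on $[m]$. A Ferrers board $\lambda=(\lambda_1\ge\dots\ge\lambda_n>0)$ with $\lambda_1=n$ is drawn in French notation: rows numbered $1,\dots,n$ from bottom to top, row $i$ consisting of cells $(i,1),\dots,(i,\lambda_i)$. A transversal of $\lambda$ is a $0/1$-filling of its cells with exactly one $1$ in each row and column. A transversal $T$ contains a POP $p$ of size $m$ if there are rows $r_1<\dots<r_m$ and columns $c_1<\dots<c_m$ such that every cell $(r_a,c_b)$ lies in $\lambda$ and the $1$ of column $c_b$ lies in row $r_{\sigma(b)}$ for each $b$ (so $\sigma\in\mathfrak S_m$), with $\sigma(j)<\sigma(j')$ whenever $j<_p j'$; $T$ contains a classical pattern $\alpha\in\mathfrak S_m$ if this holds with $\sigma=\alpha$. Otherwise $T$ avoids it. Two POPs (or sets of patterns) are shape-Wilf-equivalent, $\sim_s$, if for every Ferrers board the numbers of avoiding transversals coincide. *)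

theory Defs
  imports Main
begin

text \<open>A Ferrers board with n rows, given by row lengths lam 1, ..., lam n
  (French notation, rows numbered bottom to top), with
  lam 1 \<ge> ... \<ge> lam n > 0 and lam 1 = n.\<close>
definition ferrers :: "nat \<Rightarrow> (nat \<Rightarrow> nat) \<Rightarrow> bool" where
  "ferrers n lam \<longleftrightarrow> 0 < n \<and> lam 1 = n \<and>
     (\<forall>i\<in>{1..<n}. lam (Suc i) \<le> lam i) \<and> (\<forall>i\<in>{1..n}. 0 < lam i)"

definition cells :: "nat \<Rightarrow> (nat \<Rightarrow> nat) \<Rightarrow> (nat \<times> nat) set" where
  "cells n lam = {(i, j). i \<in> {1..n} \<and> j \<in> {1..lam i}}"

text \<open>A transversal: a 0/1-filling, represented by the set of cells containing a 1,
  with exactly one 1 in each row 1..n and each column 1..lam 1 = n.\<close>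
definition transversal :: "nat \<Rightarrow> (nat \<Rightarrow> nat) \<Rightarrow> (nat \<times> nat) set \<Rightarrow> bool" where
  "transversal n lam T \<longleftrightarrow> T \<subseteq> cells n lam \<and>
     (\<forall>i\<in>{1..n}. \<exists>!j. (i, j) \<in> T) \<and> (\<forall>j\<in>{1..lam 1}. \<exists>!i. (i, j) \<in> T)"

definition occurs_with ::
  "nat \<Rightarrow> (nat \<Rightarrow> nat) \<Rightarrow> (nat \<times> nat) set \<Rightarrow> nat \<Rightarrow> (nat \<Rightarrow> nat) \<Rightarrow> bool" where
  "occurs_with n lam T m \<sigma> \<longleftrightarrow>
     (\<exists>r c. strict_mono_on {1..m} r \<and> strict_mono_on {1..m} c \<and>
        (\<forall>a\<in>{1..m}. \<forall>b\<in>{1..m}. (r a, c b) \<in> cells n lam) \<and>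
        (\<forall>b\<in>{1..m}. (r (\<sigma> b), c b) \<in> T))"

text \<open>A POP of size m is given by its strict order relation rel j j' (meaning j <_p j').\<close>
definition contains_pop ::
  "nat \<Rightarrow> (nat \<Rightarrow> nat) \<Rightarrow> (nat \<times> nat) set \<Rightarrow> nat \<Rightarrow> (nat \<Rightarrow> nat \<Rightarrow> bool) \<Rightarrow> bool" where
  "contains_pop n lam T m rel \<longleftrightarrow>
     (\<exists>\<sigma>. bij_betw \<sigma> {1..m} {1..m} \<and> occurs_with n lam T m \<sigma> \<and>
        (\<forall>j\<in>{1..m}. \<forall>j'\<in>{1..m}. rel j j' \<longrightarrow> \<sigma> j < \<sigma> j'))"

text \<open>Classical pattern alpha in S_m, given as the list [alpha 1, ..., alpha m].\<close>
definition contains_perm ::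
  "nat \<Rightarrow> (nat \<Rightarrow> nat) \<Rightarrow> (nat \<times> nat) set \<Rightarrow> nat list \<Rightarrow> bool" where
  "contains_perm n lam T \<alpha> \<longleftrightarrow> occurs_with n lam T (length \<alpha>) (\<lambda>b. \<alpha> ! (b - 1))"

definition num_avoid_pop :: "nat \<Rightarrow> (nat \<Rightarrow> nat) \<Rightarrow> nat \<Rightarrow> (nat \<Rightarrow> nat \<Rightarrow> bool) \<Rightarrow> nat" where
  "num_avoid_pop n lam m rel =
     card {T. transversal n lam T \<and> \<not> contains_pop n lam T m rel}"

definition num_avoid_perms :: "nat \<Rightarrow> (nat \<Rightarrow> nat) \<Rightarrow> nat list set \<Rightarrow> nat" where
  "num_avoid_perms n lam S =
     card {T. transversal n lam T \<and> (\<forall>\<alpha>\<in>S. \<not> contains_perm n lam T \<alpha>)}"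

definition shape_wilf_pop :: "nat \<Rightarrow> (nat \<Rightarrow> nat \<Rightarrow> bool) \<Rightarrow> (nat \<Rightarrow> nat \<Rightarrow> bool) \<Rightarrow> bool" where
  "shape_wilf_pop m p q \<longleftrightarrow>
     (\<forall>n lam. ferrers n lam \<longrightarrow> num_avoid_pop n lam m p = num_avoid_pop n lam m q)"

definition shape_wilf_perms :: "nat list set \<Rightarrow> nat list set \<Rightarrow> bool" where
  "shape_wilf_perms S S' \<longleftrightarrow>
     (\<forall>n lam. ferrers n lam \<longrightarrow> num_avoid_perms n lam S = num_avoid_perms n lam S')"

end

theory Submission
  imports Defs
begin

text \<open>
  Encode a transversal of the board by the list R of its rows, column by column. An occurrence
  of p (of p') is then a triple of columns i < j < l whose rows all reach column l + 1, with the
  row of column l below (above) the row of column j; the classical patterns 132, 231, 321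
  (123, 213, 312) are exactly the standardizations of such triples, so both claims say that the
  two kinds of avoiders are equinumerous.

  Call a row full if it has length n, and let K be the number of full rows. The last column has
  its 1 in some full row r, and deleting row r and the last column leaves a board that does not
  depend on r. An occurrence through the last column consists of two earlier entries in full
  rows, the later one above r for p and below r for p'. Hence, for an avoider R of the smaller
  board, whether its extension by r is an avoider depends only on r and on the first entry x of
  R lying in a full row. Counting avoiders according to x, an induction on n shows: there are
  \<alpha> and \<beta> such that the p-avoiders number \<beta> for x = 1 and \<alpha> otherwise, and the p'-avoiders
  number \<beta> for x = K and \<alpha> otherwise. Summing over x gives \<beta> + (K - 1) \<alpha> for both.
\<close>

section \<open>Transversals as permutations\<close>

text \<open>R ! q is the row of the 1 in column q + 1.\<close>

definition fitting_perms :: "(nat \<Rightarrow> nat) \<Rightarrow> nat \<Rightarrow> nat list set" where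
  "fitting_perms lam n =
     {R. length R = n \<and> distinct R \<and> set R = {1..n} \<and> (\<forall>q<n. q < lam (R ! q))}"

definition full_rows :: "(nat \<Rightarrow> nat) \<Rightarrow> nat \<Rightarrow> nat \<Rightarrow> bool" where
  "full_rows lam n K \<longleftrightarrow> K \<le> n \<and> (\<forall>i\<in>{1..K}. n \<le> lam i) \<and> (\<forall>i\<in>{K<..n}. lam i < n)"

definition skip :: "nat \<Rightarrow> nat \<Rightarrow> nat" where
  "skip r x = (if x < r then x else Suc x)"

definition add_col :: "nat \<Rightarrow> nat list \<Rightarrow> nat list" where
  "add_col r R = map (skip r) R @ [r]"

text \<open>The board left after deleting row r and the last column m + 1.\<close>

definition minor :: "(nat \<Rightarrow> nat) \<Rightarrow> nat \<Rightarrow> nat \<Rightarrow> nat \<Rightarrow> nat" where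
  "minor lam m r i = min (lam (skip r i)) m"

lemma finite_fitting_perms: "finite (fitting_perms lam n)"
proof (rule finite_subset)
  show "fitting_perms lam n \<subseteq> {R. set R \<subseteq> {1..n} \<and> length R = n}"
    unfolding fitting_perms_def by auto
  show "finite {R. set R \<subseteq> {1..n} \<and> length R = n}"
    by (rule finite_lists_length_eq) simp
qed

lemma skip_less_iff [simp]: "skip r x < skip r y \<longleftrightarrow> x < y"
  unfolding skip_def by auto

lemma inj_skip: "inj (skip r)"
  unfolding inj_def skip_def by auto

lemma skip_neq [simp]: "skip r x \<noteq> r" "r \<noteq> skip r x"
  unfolding skip_def by auto

lemma skip_le_iff:
  assumes "1 \<le> r" "r \<le> K"
  shows "skip r y \<le> K \<longleftrightarrow> y \<le> K - 1"
  using assms unfolding skip_def by auto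

lemma skip_image:
  assumes "1 \<le> r" "r \<le> Suc m"
  shows "skip r ` {1..m} = {1..Suc m} - {r}"
proof
  show "skip r ` {1..m} \<subseteq> {1..Suc m} - {r}"
    using assms unfolding skip_def by auto
  show "{1..Suc m} - {r} \<subseteq> skip r ` {1..m}"
  proof
    fix x assume x: "x \<in> {1..Suc m} - {r}"
    show "x \<in> skip r ` {1..m}"
    proof (cases "x < r")
      case True
      then show ?thesis using x assms by (intro image_eqI[of _ _ x]) (auto simp: skip_def)
    next
      case False
      then show ?thesis using x assms by (intro image_eqI[of _ _ "x - 1"]) (auto simp: skip_def)
    qed
  qed
qed

lemma length_add_col [simp]: "length (add_col r R) = Suc (length R)"
  unfolding add_col_def by simp

lemma add_col_eq_iff: "add_col r R = add_col r' R' \<longleftrightarrow> r = r' \<and> R = R'"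
  unfolding add_col_def using inj_skip by (auto simp: inj_map_eq_map)

lemma perm_eq_add_col:
  assumes "distinct R" "set R = {1..Suc m}" "length R = Suc m"
  obtains R' where "distinct R'" "set R' = {1..m}" "R = add_col (R ! m) R'"
proof -
  define r where "r = R ! m"
  define B where "B = butlast R"
  have "R \<noteq> []"
    using assms(3) by auto
  then have RB: "R = B @ [r]"
    using assms(3) unfolding B_def r_def by (metis append_butlast_last_id last_conv_nth diff_Suc_1)
  have "distinct (B @ [r])"
    using assms(1) RB by simp
  then have B: "distinct B" "r \<notin> set B"
    by simp_all
  have "r \<in> {1..Suc m}" "set B = {1..Suc m} - {r}"
    using assms(2) RB B(2) by auto
  define R' where "R' = map (\<lambda>x. if x < r then x else x - 1) B"
  have B_eq: "map (skip r) R' = B"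
    unfolding R'_def map_map
  proof (rule map_idI)
    fix x assume "x \<in> set B"
    then have "x \<noteq> r"
      using B(2) by auto
    then show "(skip r \<circ> (\<lambda>x. if x < r then x else x - 1)) x = x"
      by (auto simp: skip_def)
  qed
  have "distinct R'"
    using B(1) B_eq by (metis distinct_map)
  moreover have "set R' = {1..m}"
  proof -
    have "skip r ` set R' = skip r ` {1..m}"
      using B_eq \<open>set B = {1..Suc m} - {r}\<close> skip_image[of r m] \<open>r \<in> {1..Suc m}\<close>
      by (metis atLeastAtMost_iff list.set_map)
    then show ?thesis
      using inj_skip by (simp add: inj_image_eq_iff)
  qed
  moreover have "R = add_col r R'"
    using RB B_eq unfolding add_col_def by simp
  ultimately show ?thesis
    using that unfolding r_def by blast
qed

lemma full_rows_last_row: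
  assumes F: "full_rows lam (Suc m) K" and R: "R \<in> fitting_perms lam (Suc m)"
  shows "R ! m \<in> {1..K}"
proof (rule ccontr)
  have "R ! m \<in> {1..Suc m}" "m < lam (R ! m)"
    using R unfolding fitting_perms_def by (auto simp del: atLeastAtMost_iff)
  moreover assume "R ! m \<notin> {1..K}"
  ultimately have "lam (R ! m) < Suc m" "m < lam (R ! m)"
    using F unfolding full_rows_def by auto
  then show False
    by simp
qed

lemma fitting_perms_empty: "full_rows lam (Suc m) 0 \<Longrightarrow> fitting_perms lam (Suc m) = {}"
  using full_rows_last_row[of lam m 0] by auto

lemma minor_eq:
  assumes "full_rows lam (Suc m) K" "r \<in> {1..K}"
  shows "minor lam m r = minor lam m K"
proof
  fix i
  have full: "Suc m \<le> lam i" if "i \<in> {1..K}" for i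
    using assms(1) that unfolding full_rows_def by auto
  consider "i < r" | "r \<le> i" "i < K" | "K \<le> i"
    by linarith
  then show "minor lam m r i = minor lam m K i"
  proof cases
    case 2
    then show ?thesis
      using full[of i] full[of "Suc i"] assms(2) unfolding minor_def skip_def by auto
  qed (use assms(2) in \<open>auto simp: minor_def skip_def\<close>)
qed

lemma add_col_in_fitting_perms:
  assumes F: "full_rows lam (Suc m) K" and r: "r \<in> {1..K}"
    and R: "R \<in> fitting_perms (minor lam m K) m"
  shows "add_col r R \<in> fitting_perms lam (Suc m)"
proof -
  have Rp: "length R = m" "distinct R" "set R = {1..m}" "\<forall>q<m. q < minor lam m K (R ! q)"
    using R unfolding fitting_perms_def by auto
  have K: "K \<le> Suc m" "Suc m \<le> lam r"
    using F r unfolding full_rows_def by auto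
  have "distinct (map (skip r) R)"
    using Rp(2) inj_on_subset[OF inj_skip subset_UNIV] by (simp add: distinct_map)
  then have "distinct (add_col r R)"
    unfolding add_col_def by auto
  moreover have "set (add_col r R) = {1..Suc m}"
    using skip_image[of r m] Rp(3) r K(1) unfolding add_col_def by auto
  moreover have "q < lam (add_col r R ! q)" if "q < Suc m" for q
  proof (cases "q < m")
    case True
    have "q < minor lam m r (R ! q)"
      using Rp(4) True minor_eq[OF F r] by simp
    then show ?thesis
      using True Rp(1) unfolding add_col_def minor_def by (simp add: nth_append)
  next
    case False
    then show ?thesis
      using that Rp(1) K unfolding add_col_def by (simp add: nth_append)
  qed
  ultimately show ?thesis
    using Rp(1) unfolding fitting_perms_def by auto
qed

lemma fitting_perms_SucE:
  assumes F: "full_rows lam (Suc m) K" and R: "R \<in> fitting_perms lam (Suc m)"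
  obtains r R' where "r \<in> {1..K}" "R' \<in> fitting_perms (minor lam m K) m" "R = add_col r R'"
proof -
  have Rp: "length R = Suc m" "distinct R" "set R = {1..Suc m}" "\<forall>q<Suc m. q < lam (R ! q)"
    using R unfolding fitting_perms_def by auto
  define r where "r = R ! m"
  obtain R' where R': "distinct R'" "set R' = {1..m}" "R = add_col r R'"
    using perm_eq_add_col[OF Rp(2,3,1)] unfolding r_def .
  have r: "r \<in> {1..K}"
    using full_rows_last_row[OF F R] unfolding r_def .
  have "length R' = m"
    using R'(3) Rp(1) by (metis length_add_col nat.inject)
  moreover have "q < minor lam m K (R' ! q)" if "q < m" for q
  proof -
    have "R ! q = skip r (R' ! q)"
      using R'(3) that \<open>length R' = m\<close> unfolding add_col_def by (simp add: nth_append)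
    then have "q < minor lam m r (R' ! q)"
      using Rp(4) that unfolding minor_def by (metis less_SucI min_less_iff_conj)
    then show ?thesis
      using minor_eq[OF F r] by simp
  qed
  ultimately have "R' \<in> fitting_perms (minor lam m K) m"
    using R'(1,2) unfolding fitting_perms_def by auto
  then show ?thesis
    using that r R'(3) by blast
qed

lemma bij_betw_add_col:
  assumes "full_rows lam (Suc m) K"
  shows "bij_betw (\<lambda>(r, R). add_col r R) ({1..K} \<times> fitting_perms (minor lam m K) m)
           (fitting_perms lam (Suc m))"
proof (rule bij_betwI')
  show "((\<lambda>(r, R). add_col r R) p = (\<lambda>(r, R). add_col r R) p') = (p = p')" for p p'
    by (cases p; cases p') (simp add: add_col_eq_iff)
  show "(\<lambda>(r, R). add_col r R) p \<in> fitting_perms lam (Suc m)"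
    if "p \<in> {1..K} \<times> fitting_perms (minor lam m K) m" for p
    using that add_col_in_fitting_perms[OF assms] by (cases p) simp
  show "\<exists>p\<in>{1..K} \<times> fitting_perms (minor lam m K) m. R = (\<lambda>(r, R). add_col r R) p"
    if R: "R \<in> fitting_perms lam (Suc m)" for R
  proof -
    obtain r R' where "r \<in> {1..K}" "R' \<in> fitting_perms (minor lam m K) m" "R = add_col r R'"
      using fitting_perms_SucE[OF assms R] .
    then show ?thesis
      by (intro bexI[of _ "(r, R')"]) simp_all
  qed
qed

lemma card_fitting_perms_Suc:
  assumes "full_rows lam (Suc m) K"
  shows "card {R \<in> fitting_perms lam (Suc m). P R}
       = (\<Sum>r\<in>{1..K}. card {R \<in> fitting_perms (minor lam m K) m. P (add_col r R)})"
proof -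
  let ?A = "SIGMA r:{1..K}. {R \<in> fitting_perms (minor lam m K) m. P (add_col r R)}"
  have "?A = {p \<in> {1..K} \<times> fitting_perms (minor lam m K) m. P ((\<lambda>(r, R). add_col r R) p)}"
    by auto
  then have "bij_betw (\<lambda>(r, R). add_col r R) ?A {R \<in> fitting_perms lam (Suc m). P R}"
    using bij_betw_Collect[OF bij_betw_add_col[OF assms]] by simp
  then have "card {R \<in> fitting_perms lam (Suc m). P R} = card ?A"
    by (simp add: bij_betw_same_card)
  also have "\<dots> = (\<Sum>r\<in>{1..K}. card {R \<in> fitting_perms (minor lam m K) m. P (add_col r R)})"
    using finite_fitting_perms by (simp add: card_SigmaI)
  finally show ?thesis .
qed

section \<open>Occurrences and the last column\<close>

text \<open>
  Columns i < j < l (counted from 0) whose rows all reach column l + 1, so that the 3 \<times> 3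
  grid they span with their rows lies in the board; ord compares the rows of columns j and l.
\<close>

definition occ :: "(nat \<Rightarrow> nat \<Rightarrow> bool) \<Rightarrow> (nat \<Rightarrow> nat) \<Rightarrow> nat list \<Rightarrow> bool" where
  "occ ord lam R \<longleftrightarrow> (\<exists>i j l. i < j \<and> j < l \<and> l < length R \<and> ord (R ! j) (R ! l) \<and>
     l < lam (R ! i) \<and> l < lam (R ! j) \<and> l < lam (R ! l))"

lemma not_occ_short: "length R < 3 \<Longrightarrow> \<not> occ ord lam R"
  unfolding occ_def by auto

lemma occ_snoc_iff:
  "occ ord lam (xs @ [y]) \<longleftrightarrow> occ ord lam xs \<or>
     (\<exists>i j. i < j \<and> j < length xs \<and> ord (xs ! j) y \<and>
        length xs < lam (xs ! i) \<and> length xs < lam (xs ! j) \<and> length xs < lam y)"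
  (is "_ \<longleftrightarrow> _ \<or> ?last")
proof
  assume "occ ord lam (xs @ [y])"
  then obtain i j l where ijl: "i < j" "j < l" "l \<le> length xs"
    and o: "ord ((xs @ [y]) ! j) ((xs @ [y]) ! l)" "l < lam ((xs @ [y]) ! i)"
      "l < lam ((xs @ [y]) ! j)" "l < lam ((xs @ [y]) ! l)"
    unfolding occ_def length_append_singleton less_Suc_eq_le by blast
  have "(xs @ [y]) ! i = xs ! i" "(xs @ [y]) ! j = xs ! j"
    using ijl by (simp_all add: nth_append)
  show "occ ord lam xs \<or> ?last"
  proof (cases "l = length xs")
    case True
    then have ?last
      using ijl o \<open>(xs @ [y]) ! i = xs ! i\<close> \<open>(xs @ [y]) ! j = xs ! j\<close> by auto
    then show ?thesis ..
  next
    case False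
    then have "(xs @ [y]) ! l = xs ! l"
      using ijl(3) by (simp add: nth_append)
    then have "occ ord lam xs"
      unfolding occ_def using ijl o False \<open>(xs @ [y]) ! i = xs ! i\<close> \<open>(xs @ [y]) ! j = xs ! j\<close>
      by (intro exI[of _ i] exI[of _ j] exI[of _ l]) simp
    then show ?thesis ..
  qed
next
  assume "occ ord lam xs \<or> ?last"
  then show "occ ord lam (xs @ [y])"
  proof
    assume "occ ord lam xs"
    then obtain i j l where "i < j" "j < l" "l < length xs" "ord (xs ! j) (xs ! l)"
      "l < lam (xs ! i)" "l < lam (xs ! j)" "l < lam (xs ! l)"
      unfolding occ_def by blast
    then show ?thesis
      unfolding occ_def by (intro exI[of _ i] exI[of _ j] exI[of _ l]) (simp add: nth_append)
  next
    assume ?last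
    then obtain i j where "i < j" "j < length xs" "ord (xs ! j) y"
      "length xs < lam (xs ! i)" "length xs < lam (xs ! j)" "length xs < lam y"
      by blast
    then show ?thesis
      unfolding occ_def by (intro exI[of _ i] exI[of _ j] exI[of _ "length xs"]) (simp add: nth_append)
  qed
qed

lemma occ_add_col_iff:
  assumes ord: "ord \<in> {(<), (>)}" and len: "length R = m" and r: "m < lam r"
  shows "occ ord lam (add_col r R) \<longleftrightarrow> occ ord (minor lam m r) R \<or>
           (\<exists>i j. i < j \<and> j < m \<and> ord (skip r (R ! j)) r \<and>
              m < lam (skip r (R ! i)) \<and> m < lam (skip r (R ! j)))"
proof -
  let ?S = "map (skip r) R"
  have nth: "?S ! k = skip r (R ! k)" if "k < m" for k
    using that len by simp
  have ord_skip: "ord (skip r a) (skip r b) \<longleftrightarrow> ord a b" for a b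
    using ord by auto
  have "ord (?S ! j) (?S ! l) \<and> l < lam (?S ! i) \<and> l < lam (?S ! j) \<and> l < lam (?S ! l) \<longleftrightarrow>
      ord (R ! j) (R ! l) \<and> l < minor lam m r (R ! i) \<and> l < minor lam m r (R ! j) \<and> l < minor lam m r (R ! l)"
    if "i < j" "j < l" "l < m" for i j l
    using that nth[of i] nth[of j] nth[of l] ord_skip unfolding minor_def by simp
  then have "occ ord lam ?S \<longleftrightarrow> occ ord (minor lam m r) R"
    unfolding occ_def using len by (simp only: length_map) blast
  moreover have "ord (?S ! j) r \<and> m < lam (?S ! i) \<and> m < lam (?S ! j) \<longleftrightarrow>
      ord (skip r (R ! j)) r \<and> m < lam (skip r (R ! i)) \<and> m < lam (skip r (R ! j))"
    if "i < j" "j < m" for i j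
    using that nth[of i] nth[of j] by simp
  ultimately show ?thesis
    unfolding add_col_def occ_snoc_iff using len r by (simp only: length_map) blast
qed

text \<open>The first entry of R that is at most t (junk if there is none).\<close>

definition first_le :: "nat \<Rightarrow> nat list \<Rightarrow> nat" where
  "first_le t R = the (find (\<lambda>x. x \<le> t) R)"

lemma first_le_eqI:
  assumes "p < length R" "R ! p \<le> t" "\<forall>q<p. t < R ! q"
  shows "first_le t R = R ! p"
proof -
  have "find (\<lambda>x. x \<le> t) R = Some (R ! p)"
    using assms by (auto simp: find_Some_iff not_le)
  then show ?thesis
    unfolding first_le_def by simp
qed

lemma first_leE:
  assumes "x \<in> set R" "x \<le> t"
  obtains p where "p < length R" "R ! p \<le> t" "\<forall>q<p. t < R ! q" "first_le t R = R ! p"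
proof -
  obtain y where "find (\<lambda>x. x \<le> t) R = Some y"
    using assms by (metis find_None_iff not_Some_eq)
  then obtain p where "p < length R" "R ! p \<le> t" "\<forall>q<p. t < R ! q" "y = R ! p"
    by (auto simp: find_Some_iff not_le)
  moreover have "first_le t R = y"
    unfolding first_le_def using \<open>find (\<lambda>x. x \<le> t) R = Some y\<close> by simp
  ultimately show ?thesis
    using that by simp
qed

lemma first_le_mem:
  assumes "R \<in> fitting_perms lam n" "t \<in> {1..n}"
  shows "first_le t R \<in> {1..t}"
proof -
  have "1 \<in> set R"
    using assms unfolding fitting_perms_def by auto
  then obtain p where "p < length R" "R ! p \<le> t" "first_le t R = R ! p"
    using assms(2) by (auto elim: first_leE)
  moreover have "R ! p \<in> {1..n}"
    using assms(1) \<open>p < length R\<close> nth_mem unfolding fitting_perms_def by blast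
  ultimately show ?thesis
    by simp
qed

lemma preceded_mem_iff:
  assumes "distinct R" "{1..t} \<subseteq> set R" "S \<subseteq> {1..t}"
  shows "(\<exists>i j. i < j \<and> j < length R \<and> R ! i \<le> t \<and> R ! j \<in> S) \<longleftrightarrow> \<not> S \<subseteq> {first_le t R}"
proof
  assume "\<exists>i j. i < j \<and> j < length R \<and> R ! i \<le> t \<and> R ! j \<in> S"
  then obtain i j where ij: "i < j" "j < length R" "R ! i \<le> t" "R ! j \<in> S"
    by blast
  have "R ! i \<in> set R"
    using ij(1,2) by simp
  then obtain p where p: "p < length R" "\<forall>q<p. t < R ! q" "first_le t R = R ! p"
    using ij(3) by (rule first_leE)
  have "p \<le> i"
    using p(2) ij(3) by (meson not_le)
  then have "R ! j \<noteq> first_le t R"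
    using assms(1) ij(1,2) p(1,3) by (simp add: nth_eq_iff_index_eq)
  then show "\<not> S \<subseteq> {first_le t R}"
    using ij(4) by blast
next
  assume "\<not> S \<subseteq> {first_le t R}"
  then obtain v where v: "v \<in> S" "v \<noteq> first_le t R"
    by blast
  then have "v \<in> set R" "v \<le> t"
    using assms(2,3) by auto
  then obtain j where j: "j < length R" "R ! j = v"
    by (meson in_set_conv_nth)
  obtain p where p: "p < length R" "R ! p \<le> t" "\<forall>q<p. t < R ! q" "first_le t R = R ! p"
    using \<open>v \<in> set R\<close> \<open>v \<le> t\<close> by (rule first_leE)
  have "p < j"
    using p(3,4) j v \<open>v \<le> t\<close> by (metis linorder_neqE_nat not_le)
  then show "\<exists>i j. i < j \<and> j < length R \<and> R ! i \<le> t \<and> R ! j \<in> S"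
    using j p(2) v(1) by blast
qed

lemma full_rows_skip_iff:
  assumes F: "full_rows lam (Suc m) K" and r: "r \<in> {1..K}" and y: "y \<in> {1..m}"
  shows "m < lam (skip r y) \<longleftrightarrow> y \<le> K - 1"
proof -
  have row: "skip r y \<in> {1..Suc m}"
    using y unfolding skip_def by auto
  have "m < lam (skip r y) \<longleftrightarrow> skip r y \<le> K"
  proof
    assume "m < lam (skip r y)"
    then show "skip r y \<le> K"
      using F row unfolding full_rows_def by (meson greaterThanAtMost_iff atLeastAtMost_iff not_le not_less_eq)
  next
    assume "skip r y \<le> K"
    then show "m < lam (skip r y)"
      using F row unfolding full_rows_def by (simp add: Suc_le_eq)
  qed
  also have "\<dots> \<longleftrightarrow> y \<le> K - 1"
    using r by (simp add: skip_le_iff)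
  finally show ?thesis .
qed

lemma avoids_add_col_iff:
  assumes ord: "ord \<in> {(<), (>)}" and F: "full_rows lam (Suc m) K" and r: "r \<in> {1..K}"
    and R: "R \<in> fitting_perms (minor lam m K) m"
  shows "\<not> occ ord lam (add_col r R) \<longleftrightarrow>
           \<not> occ ord (minor lam m K) R \<and> {y \<in> {1..K - 1}. ord (skip r y) r} \<subseteq> {first_le (K - 1) R}"
proof -
  let ?S = "{y \<in> {1..K - 1}. ord (skip r y) r}"
  have Rp: "length R = m" "distinct R" "set R = {1..m}"
    using R unfolding fitting_perms_def by auto
  have "K \<le> Suc m" "Suc m \<le> lam r"
    using F r unfolding full_rows_def by auto
  have entry: "R ! q \<in> {1..m}" if "q < m" for q
    using that Rp by (metis nth_mem)
  have cond: "ord (skip r (R ! j)) r \<and> m < lam (skip r (R ! i)) \<and> m < lam (skip r (R ! j))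
      \<longleftrightarrow> R ! i \<le> K - 1 \<and> R ! j \<in> ?S" if "i < j" "j < m" for i j
    using full_rows_skip_iff[OF F r entry] that entry[OF that(2)] by auto
  have "(\<exists>i j. i < j \<and> j < m \<and> ord (skip r (R ! j)) r \<and>
            m < lam (skip r (R ! i)) \<and> m < lam (skip r (R ! j)))
        \<longleftrightarrow> (\<exists>i j. i < j \<and> j < length R \<and> R ! i \<le> K - 1 \<and> R ! j \<in> ?S)"
    using cond Rp(1) by blast
  also have "\<dots> \<longleftrightarrow> \<not> ?S \<subseteq> {first_le (K - 1) R}"
    using \<open>K \<le> Suc m\<close> Rp by (intro preceded_mem_iff) auto
  finally have "occ ord lam (add_col r R) \<longleftrightarrow> occ ord (minor lam m r) R \<or> \<not> ?S \<subseteq> {first_le (K - 1) R}"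
    using occ_add_col_iff[OF ord Rp(1), of lam r] \<open>Suc m \<le> lam r\<close> by simp
  then show ?thesis
    using minor_eq[OF F r] by simp
qed

lemma first_le_add_col:
  assumes "r \<in> {1..K}" "x \<in> set R" "x \<le> K - 1"
  shows "first_le K (add_col r R) = skip r (first_le (K - 1) R)"
proof -
  obtain p where p: "p < length R" "R ! p \<le> K - 1" "\<forall>q<p. K - 1 < R ! q" "first_le (K - 1) R = R ! p"
    using assms(2,3) by (rule first_leE)
  have col: "add_col r R ! q = skip r (R ! q)" if "q < length R" for q
    using that unfolding add_col_def by (simp add: nth_append)
  have skip_le: "skip r y \<le> K \<longleftrightarrow> y \<le> K - 1" for y
    using assms(1) by (simp add: skip_le_iff)
  have "first_le K (add_col r R) = add_col r R ! p"
  proof (rule first_le_eqI)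
    show "add_col r R ! p \<le> K"
      using p(1,2) col skip_le by simp
    show "\<forall>q<p. K < add_col r R ! q"
      using p(1,3) col skip_le by (simp add: not_le[symmetric])
  qed (use p(1) in simp)
  then show ?thesis
    using p(1,4) col by simp
qed

section \<open>Counting avoiders by their first entry in a full row\<close>

definition avoiders :: "(nat \<Rightarrow> nat \<Rightarrow> bool) \<Rightarrow> (nat \<Rightarrow> nat) \<Rightarrow> nat \<Rightarrow> nat list set" where
  "avoiders ord lam n = {R \<in> fitting_perms lam n. \<not> occ ord lam R}"

definition first_count :: "(nat \<Rightarrow> nat \<Rightarrow> bool) \<Rightarrow> (nat \<Rightarrow> nat) \<Rightarrow> nat \<Rightarrow> nat \<Rightarrow> nat \<Rightarrow> nat" where
  "first_count ord lam n t x = card {R \<in> avoiders ord lam n. first_le t R = x}"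

lemma finite_avoiders: "finite (avoiders ord lam n)"
  unfolding avoiders_def using finite_fitting_perms by simp

lemma first_le_minor_mem:
  assumes F: "full_rows lam (Suc m) K" and K: "2 \<le> K" and R: "R \<in> avoiders ord (minor lam m K) m"
  shows "first_le (K - 1) R \<in> {1..K - 1}"
  using F K R unfolding full_rows_def avoiders_def by (intro first_le_mem) auto

lemma first_le_add_col_avoider:
  assumes F: "full_rows lam (Suc m) K" and K: "2 \<le> K" and r: "r \<in> {1..K}"
    and R: "R \<in> avoiders ord (minor lam m K) m"
  shows "first_le K (add_col r R) = skip r (first_le (K - 1) R)"
proof -
  have "1 \<in> set R"
    using F K R unfolding full_rows_def avoiders_def fitting_perms_def by auto
  then show ?thesis
    using r K by (intro first_le_add_col) auto
qed

lemma first_count_Suc: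
  assumes ord: "ord \<in> {(<), (>)}" and F: "full_rows lam (Suc m) K"
  shows "first_count ord lam (Suc m) K x =
    (\<Sum>r\<in>{1..K}. card {R \<in> avoiders ord (minor lam m K) m.
        {y \<in> {1..K - 1}. ord (skip r y) r} \<subseteq> {first_le (K - 1) R} \<and> first_le K (add_col r R) = x})"
proof -
  have "first_count ord lam (Suc m) K x =
      card {R \<in> fitting_perms lam (Suc m). \<not> occ ord lam R \<and> first_le K R = x}"
    unfolding first_count_def avoiders_def by (simp add: conj_assoc)
  also have "\<dots> = (\<Sum>r\<in>{1..K}. card {R \<in> fitting_perms (minor lam m K) m.
      \<not> occ ord lam (add_col r R) \<and> first_le K (add_col r R) = x})"
    by (rule card_fitting_perms_Suc[OF F])
  also have "\<dots> = (\<Sum>r\<in>{1..K}. card {R \<in> avoiders ord (minor lam m K) m.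
      {y \<in> {1..K - 1}. ord (skip r y) r} \<subseteq> {first_le (K - 1) R} \<and> first_le K (add_col r R) = x})"
    using avoids_add_col_iff[OF ord F] unfolding avoiders_def
    by (intro sum.cong refl arg_cong[where f = card]) blast
  finally show ?thesis .
qed

lemma first_count_Suc_one:
  assumes ord: "ord \<in> {(<), (>)}" and F: "full_rows lam (Suc m) 1"
  shows "first_count ord lam (Suc m) 1 1 = card (avoiders ord (minor lam m 1) m)"
proof -
  have "first_le 1 (add_col 1 R) = 1" if "R \<in> fitting_perms (minor lam m 1) m" for R
    using first_le_mem[OF add_col_in_fitting_perms[OF F _ that], of 1 1] by simp
  then have "{R \<in> avoiders ord (minor lam m 1) m. first_le 1 (add_col 1 R) = 1}
      = avoiders ord (minor lam m 1) m"
    unfolding avoiders_def by blast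
  then show ?thesis
    using first_count_Suc[OF ord F, of 1] by simp
qed

lemma first_count_Suc_two_le:
  assumes ord: "ord \<in> {(<), (>)}" and F: "full_rows lam (Suc m) K" and K: "2 \<le> K"
  shows "first_count ord lam (Suc m) K x =
    (\<Sum>r\<in>{1..K}. card {R \<in> avoiders ord (minor lam m K) m.
        {y \<in> {1..K - 1}. ord (skip r y) r} \<subseteq> {first_le (K - 1) R} \<and> skip r (first_le (K - 1) R) = x})"
  unfolding first_count_Suc[OF ord F] using first_le_add_col_avoider[OF F K]
  by (intro sum.cong refl arg_cong[where f = card]) auto

lemma sum_eq_two:
  assumes "finite A" "a \<in> A" "b \<in> A" "a \<noteq> b" "\<forall>r\<in>A - {a, b}. g r = (0::nat)"
  shows "sum g A = g a + g b"
proof -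
  have "sum g A = sum g {a, b}"
    using assms by (intro sum.mono_neutral_right) auto
  then show ?thesis
    using assms(4) by simp
qed

text \<open>
  Extending by row r avoids the decreasing pattern only if at most one other full row lies above
  r, so only r \<in> {K - 1, K} contribute.
\<close>

lemma first_count_desc_Suc:
  assumes F: "full_rows lam (Suc m) K" and K: "2 \<le> K" and x: "x \<in> {1..K}"
  shows "first_count (>) lam (Suc m) K x = first_count (>) (minor lam m K) m (K - 1) (min x (K - 1))"
proof -
  let ?A = "avoiders (>) (minor lam m K) m"
  let ?f = "first_le (K - 1)"
  define g where "g r = card {R \<in> ?A. {y \<in> {1..K - 1}. r < skip r y} \<subseteq> {?f R} \<and> skip r (?f R) = x}" for r
  have f_mem: "?f R \<in> {1..K - 1}" if "R \<in> ?A" for R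
    using first_le_minor_mem[OF F K that] .
  have "first_count (>) lam (Suc m) K x = (\<Sum>r\<in>{1..K}. g r)"
    unfolding g_def by (rule first_count_Suc_two_le[OF _ F K]) simp
  also have "\<dots> = g (K - 1) + g K"
  proof (rule sum_eq_two)
    show "\<forall>r\<in>{1..K} - {K - 1, K}. g r = 0"
    proof
      fix r assume r: "r \<in> {1..K} - {K - 1, K}"
      then have "r \<in> {y \<in> {1..K - 1}. r < skip r y}" "K - 1 \<in> {y \<in> {1..K - 1}. r < skip r y}"
        unfolding skip_def by auto
      then have "\<not> {y \<in> {1..K - 1}. r < skip r y} \<subseteq> {h}" for h
        using r by blast
      then show "g r = 0"
        unfolding g_def by simp
    qed
  qed (use K in auto)
  also have "g K = card {R \<in> ?A. ?f R = x}"
  proof -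
    have "{y \<in> {1..K - 1}. K < skip K y} \<subseteq> {?f R} \<and> skip K (?f R) = x \<longleftrightarrow> ?f R = x"
      if "R \<in> ?A" for R
      using f_mem[OF that] by (auto simp: skip_def)
    then show ?thesis
      unfolding g_def by (intro arg_cong[where f = card]) blast
  qed
  also have "g (K - 1) = card {R \<in> ?A. ?f R = K - 1 \<and> x = K}"
  proof -
    have "{y \<in> {1..K - 1}. K - 1 < skip (K - 1) y} \<subseteq> {?f R} \<and> skip (K - 1) (?f R) = x
        \<longleftrightarrow> ?f R = K - 1 \<and> x = K" if "R \<in> ?A" for R
      using f_mem[OF that] K by (auto simp: skip_def)
    then show ?thesis
      unfolding g_def by (intro arg_cong[where f = card]) blast
  qed
  moreover have "card {R \<in> ?A. ?f R = K} = 0"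
  proof -
    have "{R \<in> ?A. ?f R = K} = {}"
      using f_mem K by force
    then show ?thesis
      by (metis card.empty)
  qed
  ultimately show ?thesis
    using x unfolding first_count_def by (cases "x = K") (auto simp: min_def)
qed

text \<open>Dually, for the increasing pattern only r \<in> {1, 2} contribute.\<close>

lemma first_count_asc_Suc:
  assumes F: "full_rows lam (Suc m) K" and K: "2 \<le> K" and x: "x \<in> {1..K}"
  shows "first_count (<) lam (Suc m) K x = first_count (<) (minor lam m K) m (K - 1) (max 1 (x - 1))"
proof -
  let ?A = "avoiders (<) (minor lam m K) m"
  let ?f = "first_le (K - 1)"
  define g where "g r = card {R \<in> ?A. {y \<in> {1..K - 1}. skip r y < r} \<subseteq> {?f R} \<and> skip r (?f R) = x}" for r
  have f_mem: "?f R \<in> {1..K - 1}" if "R \<in> ?A" for R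
    using first_le_minor_mem[OF F K that] .
  have "first_count (<) lam (Suc m) K x = (\<Sum>r\<in>{1..K}. g r)"
    unfolding g_def by (rule first_count_Suc_two_le[OF _ F K]) simp
  also have "\<dots> = g 1 + g 2"
  proof (rule sum_eq_two)
    show "\<forall>r\<in>{1..K} - {1, 2}. g r = 0"
    proof
      fix r assume r: "r \<in> {1..K} - {1, 2}"
      then have "1 \<in> {y \<in> {1..K - 1}. skip r y < r}" "2 \<in> {y \<in> {1..K - 1}. skip r y < r}"
        unfolding skip_def by auto
      moreover have "(1::nat) \<noteq> 2"
        by simp
      ultimately have "\<not> {y \<in> {1..K - 1}. skip r y < r} \<subseteq> {h}" for h
        by blast
      then show "g r = 0"
        unfolding g_def by simp
    qed
  qed (use K in auto)
  also have "g 1 = card {R \<in> ?A. ?f R = x - 1 \<and> x \<noteq> 1}"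
  proof -
    have "{y \<in> {1..K - 1}. skip 1 y < 1} \<subseteq> {?f R} \<and> skip 1 (?f R) = x \<longleftrightarrow> ?f R = x - 1 \<and> x \<noteq> 1"
      if "R \<in> ?A" for R
      using f_mem[OF that] by (auto simp: skip_def)
    then show ?thesis
      unfolding g_def by (intro arg_cong[where f = card]) blast
  qed
  also have "g 2 = card {R \<in> ?A. ?f R = 1 \<and> x = 1}"
  proof -
    have "{y \<in> {1..K - 1}. skip 2 y < 2} \<subseteq> {?f R} \<and> skip 2 (?f R) = x \<longleftrightarrow> ?f R = 1 \<and> x = 1"
      if "R \<in> ?A" for R
      using f_mem[OF that] K by (auto simp: skip_def)
    then show ?thesis
      unfolding g_def by (intro arg_cong[where f = card]) blast
  qed
  moreover have "max 1 (x - 1) = (if x = 1 then 1 else x - 1)"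
    using x by auto
  ultimately show ?thesis
    unfolding first_count_def by (cases "x = 1") simp_all
qed

lemma occ_of_full_rows:
  assumes F: "full_rows lam n K" and R: "R \<in> fitting_perms lam n"
    and ijl: "i < j" "j < l" "l < n" and rows: "R ! i \<le> K" "R ! j \<le> K" "R ! l \<le> K"
    and ord: "ord (R ! j) (R ! l)"
  shows "occ ord lam R"
proof -
  have "R ! k \<in> {1..K}" if "k \<in> {i, j, l}" for k
  proof -
    have "R ! k \<in> set R"
      using that ijl R unfolding fitting_perms_def by auto
    then show ?thesis
      using that rows R unfolding fitting_perms_def by auto
  qed
  then have "l < lam (R ! k)" if "k \<in> {i, j, l}" for k
    using that F ijl(3) unfolding full_rows_def by fastforce
  then show ?thesis
    unfolding occ_def using ijl ord R unfolding fitting_perms_def by auto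
qed

text \<open>
  If the first entry in a full row exceeds j, the first entry at most j must be v: any other
  value y would form an occurrence together with the first full-row entry and the later v.
\<close>

lemma first_le_avoider:
  assumes R: "R \<in> avoiders ord lam n" and F: "full_rows lam n K" and j: "j \<le> K"
    and v: "v \<in> {1..j}" and ord_v: "\<forall>y\<in>{1..j}. y \<noteq> v \<longrightarrow> ord y v"
  shows "first_le j R = (if first_le K R \<le> j then first_le K R else v)"
proof -
  have Rp: "R \<in> fitting_perms lam n" "\<not> occ ord lam R"
    using R unfolding avoiders_def by auto
  then have len: "length R = n" and "set R = {1..n}"
    unfolding fitting_perms_def by auto
  then have "v \<in> set R"
    using v j F unfolding full_rows_def by auto
  have "v \<le> j" "v \<le> K"
    using v j by auto
  obtain i0 where i0: "i0 < length R" "R ! i0 \<le> K" "\<forall>q<i0. K < R ! q" "first_le K R = R ! i0"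
    using \<open>v \<in> set R\<close> \<open>v \<le> K\<close> by (rule first_leE)
  obtain p where p: "p < length R" "R ! p \<le> j" "\<forall>q<p. j < R ! q" "first_le j R = R ! p"
    using \<open>v \<in> set R\<close> \<open>v \<le> j\<close> by (rule first_leE)
  show ?thesis
  proof (cases "first_le K R \<le> j")
    case True
    then have "first_le j R = R ! i0"
      using i0 j by (intro first_le_eqI) auto
    then show ?thesis
      using True i0(4) by simp
  next
    case False
    have "i0 < p"
      using i0(3,4) p(2,3) False j by (metis le_trans linorder_neqE_nat not_le)
    have "R ! p = v"
    proof (rule ccontr)
      assume "R ! p \<noteq> v"
      obtain q where q: "q < length R" "R ! q = v"
        using \<open>v \<in> set R\<close> by (metis in_set_conv_nth)
      have "p < q"
        using p(2,3) q v \<open>R ! p \<noteq> v\<close> by (metis atLeastAtMost_iff linorder_neqE_nat not_le)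
      moreover have "R ! p \<in> {1..j}"
        using p(1,2) \<open>set R = {1..n}\<close> by (metis atLeastAtMost_iff nth_mem)
      ultimately have "occ ord lam R"
        using occ_of_full_rows[OF F Rp(1) \<open>i0 < p\<close>, of q] ord_v \<open>R ! p \<noteq> v\<close> q i0(2) p(2) v j len
        by auto
      then show False
        using Rp(2) by simp
    qed
    then show ?thesis
      using False p(4) by simp
  qed
qed

lemma card_Collect_mem_eq_sum:
  assumes "finite A" "finite X"
  shows "card {a \<in> A. g a \<in> X} = (\<Sum>x\<in>X. card {a \<in> A. g a = x})"
proof -
  have "{a \<in> A. g a \<in> X} = (\<Union>x\<in>X. {a \<in> A. g a = x})"
    by auto
  also have "card \<dots> = (\<Sum>x\<in>X. card {a \<in> A. g a = x})"
    using assms by (intro card_UN_disjoint) auto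
  finally show ?thesis .
qed

lemma first_count_restrict:
  assumes F: "full_rows lam n K" and j: "j \<le> K" and v: "v \<in> {1..j}"
    and ord_v: "\<forall>y\<in>{1..j}. y \<noteq> v \<longrightarrow> ord y v" and z: "z \<in> {1..j}"
  shows "first_count ord lam n j z = (if z = v then (\<Sum>x\<in>insert v {j<..K}. first_count ord lam n K x)
           else first_count ord lam n K z)"
proof -
  let ?A = "avoiders ord lam n"
  have "K \<le> n"
    using F unfolding full_rows_def by simp
  have first: "first_le j R = (if first_le K R \<le> j then first_le K R else v)"
    and first_mem: "first_le K R \<in> {1..K}" if "R \<in> ?A" for R
    using first_le_avoider[OF that F j v ord_v] first_le_mem[of R lam n K] that v j \<open>K \<le> n\<close>
    unfolding avoiders_def by auto
  show ?thesis
  proof (cases "z = v")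
    case True
    have "{R \<in> ?A. first_le j R = z} = {R \<in> ?A. first_le K R \<in> insert v {j<..K}}"
      using first first_mem True v by fastforce
    then have "first_count ord lam n j z = card {R \<in> ?A. first_le K R \<in> insert v {j<..K}}"
      unfolding first_count_def by (simp only:)
    also have "\<dots> = (\<Sum>x\<in>insert v {j<..K}. first_count ord lam n K x)"
      unfolding first_count_def by (rule card_Collect_mem_eq_sum) (simp_all add: finite_avoiders)
    finally show ?thesis
      using True by simp
  next
    case False
    have "{R \<in> ?A. first_le j R = z} = {R \<in> ?A. first_le K R = z}"
      using first False z by fastforce
    then show ?thesis
      unfolding first_count_def using False by simp
  qed
qed

section \<open>The induction on the number of columns\<close>

text \<open>The invariant of the induction; it forces both totals to be \<beta> + (K - 1) \<alpha>.\<close>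

definition profile :: "(nat \<Rightarrow> nat) \<Rightarrow> nat \<Rightarrow> nat \<Rightarrow> nat \<Rightarrow> nat \<Rightarrow> bool" where
  "profile lam n K \<alpha> \<beta> \<longleftrightarrow> (\<forall>x\<in>{1..K}.
     first_count (>) lam n K x = (if x = 1 then \<beta> else \<alpha>) \<and>
     first_count (<) lam n K x = (if x = K then \<beta> else \<alpha>))"

lemma sum_if_eq:
  assumes "finite X" "c \<in> X"
  shows "(\<Sum>x\<in>X. if x = c then \<beta> else \<alpha>) = \<beta> + (card X - 1) * (\<alpha>::nat)"
proof -
  have "(\<Sum>x\<in>X. if x = c then \<beta> else \<alpha>) = \<beta> + (\<Sum>x\<in>X - {c}. if x = c then \<beta> else \<alpha>)"
    using assms by (simp add: sum.remove)
  also have "(\<Sum>x\<in>X - {c}. if x = c then \<beta> else \<alpha>) = (card X - 1) * \<alpha>"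
    using assms by (simp add: card_Diff_singleton)
  finally show ?thesis .
qed

lemma card_avoiders_eq_sum:
  assumes "full_rows lam n K" "1 \<le> K"
  shows "card (avoiders ord lam n) = (\<Sum>x\<in>{1..K}. first_count ord lam n K x)"
proof -
  have "K \<le> n"
    using assms(1) unfolding full_rows_def by simp
  then have "first_le K R \<in> {1..K}" if "R \<in> avoiders ord lam n" for R
    using first_le_mem[of R lam n K] that assms(2) unfolding avoiders_def by simp
  then have "avoiders ord lam n = {R \<in> avoiders ord lam n. first_le K R \<in> {1..K}}"
    by blast
  also have "card \<dots> = (\<Sum>x\<in>{1..K}. first_count ord lam n K x)"
    unfolding first_count_def by (rule card_Collect_mem_eq_sum) (simp_all add: finite_avoiders)
  finally show ?thesis .
qed

lemma card_avoiders_eq_of_profile: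
  assumes F: "full_rows lam n K" and P: "profile lam n K \<alpha> \<beta>"
  shows "card (avoiders (>) lam n) = card (avoiders (<) lam n)"
proof (cases "K = 0")
  case True
  show ?thesis
  proof (cases n)
    case 0
    then have "avoiders ord lam n = fitting_perms lam n" for ord
      using not_occ_short unfolding avoiders_def fitting_perms_def by auto
    then show ?thesis
      by simp
  next
    case (Suc m)
    then show ?thesis
      using fitting_perms_empty F \<open>K = 0\<close> unfolding avoiders_def by simp
  qed
next
  case False
  then have "card (avoiders ord lam n) = (\<Sum>x\<in>{1..K}. first_count ord lam n K x)" for ord
    using card_avoiders_eq_sum[OF F] by simp
  moreover have "(\<Sum>x\<in>{1..K}. first_count (>) lam n K x) = (\<Sum>x\<in>{1..K}. if x = 1 then \<beta> else \<alpha>)"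
    using P unfolding profile_def by (intro sum.cong) auto
  moreover have "(\<Sum>x\<in>{1..K}. first_count (<) lam n K x) = (\<Sum>x\<in>{1..K}. if x = K then \<beta> else \<alpha>)"
    using P unfolding profile_def by (intro sum.cong) auto
  moreover have "(\<Sum>x\<in>{1..K}. if x = c then \<beta> else \<alpha>) = \<beta> + (K - 1) * \<alpha>" if "c \<in> {1..K}" for c
    using sum_if_eq[OF _ that] by simp
  ultimately show ?thesis
    using False by simp
qed

lemma profile_restrict:
  assumes F: "full_rows lam n K" and P: "profile lam n K \<alpha> \<beta>"
    and j: "1 \<le> j" "j \<le> K" and z: "z \<in> {1..j}"
  shows "first_count (>) lam n j z = (if z = 1 then \<beta> + (K - j) * \<alpha> else \<alpha>)"
    and "first_count (<) lam n j z = (if z = j then \<beta> + (K - j) * \<alpha> else \<alpha>)"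
proof -
  have card: "card (insert v {j<..K}) - 1 = K - j" if "v \<le> j" for v
    using that by simp
  have "(\<Sum>x\<in>insert 1 {j<..K}. first_count (>) lam n K x) = (\<Sum>x\<in>insert 1 {j<..K}. if x = 1 then \<beta> else \<alpha>)"
    using P j unfolding profile_def by (intro sum.cong) auto
  also have "\<dots> = \<beta> + (K - j) * \<alpha>"
    using card[of 1] j by (simp add: sum_if_eq)
  finally show "first_count (>) lam n j z = (if z = 1 then \<beta> + (K - j) * \<alpha> else \<alpha>)"
    using first_count_restrict[OF F j(2), of 1 "(>)" z] P z j unfolding profile_def by auto
  have "(\<Sum>x\<in>insert j {j<..K}. first_count (<) lam n K x) = (\<Sum>x\<in>insert j {j<..K}. if x = K then \<beta> else \<alpha>)"
    using P j unfolding profile_def by (intro sum.cong) auto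
  also have "\<dots> = \<beta> + (K - j) * \<alpha>"
    using card[of j] j by (subst sum_if_eq) auto
  finally show "first_count (<) lam n j z = (if z = j then \<beta> + (K - j) * \<alpha> else \<alpha>)"
    using first_count_restrict[OF F j(2), of j "(<)" z] P z j unfolding profile_def by auto
qed

lemma profile_Suc_one:
  assumes F: "full_rows lam (Suc m) 1" and F': "full_rows (minor lam m 1) m K'"
    and P: "profile (minor lam m 1) m K' \<alpha> \<beta>"
  shows "profile lam (Suc m) 1 0 (first_count (>) lam (Suc m) 1 1)"
proof -
  have "first_count ord lam (Suc m) 1 1 = card (avoiders ord (minor lam m 1) m)"
    if "ord \<in> {(<), (>)}" for ord
    using first_count_Suc_one[OF that F] .
  then have "first_count (>) lam (Suc m) 1 1 = first_count (<) lam (Suc m) 1 1"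
    using card_avoiders_eq_of_profile[OF F' P] by simp
  then show ?thesis
    unfolding profile_def by simp
qed

text \<open>For K = 2 the special value K - 1 of the smaller board is 1, so both x = 1 and x = 2 get B.\<close>

lemma profile_Suc_two_le:
  assumes F: "full_rows lam (Suc m) K" and K: "2 \<le> K" and F': "full_rows (minor lam m K) m K'"
    and K': "K - 1 \<le> K'" and P: "profile (minor lam m K) m K' \<alpha> \<beta>"
  defines "B \<equiv> \<beta> + (K' - (K - 1)) * \<alpha>"
  shows "profile lam (Suc m) K (if K = 2 then B else \<alpha>) B"
  unfolding profile_def
proof
  fix x assume x: "x \<in> {1..K}"
  have j: "1 \<le> K - 1" "K - 1 \<le> K'"
    using K K' by simp_all
  have "min x (K - 1) \<in> {1..K - 1}" "max 1 (x - 1) \<in> {1..K - 1}"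
    using x K by auto
  moreover have "min x (K - 1) = 1 \<longleftrightarrow> x = 1 \<or> K = 2"
    using x K by auto
  moreover have "max 1 (x - 1) = K - 1 \<longleftrightarrow> x = K \<or> K = 2"
    using x K by auto
  ultimately show "first_count (>) lam (Suc m) K x = (if x = 1 then B else if K = 2 then B else \<alpha>) \<and>
      first_count (<) lam (Suc m) K x = (if x = K then B else if K = 2 then B else \<alpha>)"
    using first_count_desc_Suc[OF F K x] first_count_asc_Suc[OF F K x]
      profile_restrict[OF F' P j] unfolding B_def by auto
qed

lemma antimono_on_minor:
  assumes "antimono_on {1..Suc m} lam"
  shows "antimono_on {1..m} (minor lam m r)"
proof (rule monotone_onI)
  fix i j assume "i \<in> {1..m}" "j \<in> {1..m}" "i \<le> j"
  then have "skip r i \<in> {1..Suc m}" "skip r j \<in> {1..Suc m}" "skip r i \<le> skip r j"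
    unfolding skip_def by auto
  then have "lam (skip r j) \<le> lam (skip r i)"
    using assms by (simp add: monotone_on_def)
  then show "minor lam m r j \<le> minor lam m r i"
    unfolding minor_def by simp
qed

lemma full_rows_exists:
  assumes "antimono_on {1..n} lam"
  shows "\<exists>K. full_rows lam n K"
proof -
  let ?S = "{i \<in> {1..n}. n \<le> lam i}"
  define K where "K = Max (insert 0 ?S)"
  have "K \<le> n"
    unfolding K_def by (intro Max.boundedI) auto
  moreover have "n \<le> lam i" if "i \<in> {1..K}" for i
  proof -
    have "K \<in> insert 0 ?S"
      unfolding K_def by (intro Max_in) auto
    then have "K \<in> ?S"
      using that by auto
    then have "lam K \<le> lam i"
      using that assms by (intro monotone_onD[OF assms]) auto
    then show ?thesis
      using \<open>K \<in> ?S\<close> by simp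
  qed
  moreover have "lam i < n" if "i \<in> {K<..n}" for i
  proof (rule ccontr)
    assume "\<not> lam i < n"
    then have "i \<in> insert 0 ?S"
      using that by auto
    then have "i \<le> K"
      unfolding K_def by (simp del: insert_iff)
    then show False
      using that by simp
  qed
  ultimately show ?thesis
    unfolding full_rows_def by blast
qed

lemma full_rows_minor_ge:
  assumes F: "full_rows lam (Suc m) K" and F': "full_rows (minor lam m K) m K'"
  shows "K - 1 \<le> K'"
proof (rule ccontr)
  assume "\<not> K - 1 \<le> K'"
  then have i: "Suc K' \<in> {1..K}" "Suc K' < K" "Suc K' \<le> m"
    using F unfolding full_rows_def by auto
  moreover have "Suc m \<le> lam (Suc K')"
    using F i(1) unfolding full_rows_def by blast
  ultimately have "minor lam m K (Suc K') = m"
    unfolding minor_def skip_def by simp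
  moreover have "minor lam m K (Suc K') < m"
    using F' i unfolding full_rows_def by auto
  ultimately show False
    by simp
qed

lemma profile_exists:
  assumes "antimono_on {1..n} lam" "full_rows lam n K"
  shows "\<exists>\<alpha> \<beta>. profile lam n K \<alpha> \<beta>"
  using assms
proof (induction n arbitrary: lam K)
  case 0
  then have "K = 0"
    unfolding full_rows_def by simp
  then show ?case
    unfolding profile_def by simp
next
  case (Suc m)
  note F = Suc.prems(2)
  have mono: "antimono_on {1..m} (minor lam m K)"
    using antimono_on_minor[OF Suc.prems(1)] .
  then obtain K' where F': "full_rows (minor lam m K) m K'"
    using full_rows_exists by blast
  then obtain \<alpha> \<beta> where P: "profile (minor lam m K) m K' \<alpha> \<beta>"
    using Suc.IH[OF mono] by blast
  consider "K = 0" | "K = 1" | "2 \<le> K"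
    by linarith
  then show ?case
  proof cases
    case 1
    then show ?thesis
      unfolding profile_def by simp
  next
    case 2
    then show ?thesis
      using profile_Suc_one F F' P by blast
  next
    case 3
    then show ?thesis
      using profile_Suc_two_le[OF F 3 F' full_rows_minor_ge[OF F F'] P] by blast
  qed
qed

lemma ferrers_antimono_on:
  assumes "ferrers n lam"
  shows "antimono_on {1..n} lam"
proof (rule monotone_onI)
  fix i j assume ij: "i \<in> {1..n}" "j \<in> {1..n}" "i \<le> j"
  have step: "lam (Suc k) \<le> lam k" if "k \<in> {1..<n}" for k
    using assms that unfolding ferrers_def by blast
  show "lam j \<le> lam i"
    using lift_Suc_antimono_le_ivl[of "{1..<n}" lam i j] step ij by force
qed

theorem card_avoiders_desc_eq_asc:
  assumes "ferrers n lam"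
  shows "card (avoiders (>) lam n) = card (avoiders (<) lam n)"
proof -
  have mono: "antimono_on {1..n} lam"
    using ferrers_antimono_on[OF assms] .
  then obtain K where F: "full_rows lam n K"
    using full_rows_exists by blast
  then obtain \<alpha> \<beta> where "profile lam n K \<alpha> \<beta>"
    using profile_exists[OF mono] by blast
  then show ?thesis
    using card_avoiders_eq_of_profile[OF F] by blast
qed

section \<open>Transversals and pattern containment\<close>

definition filling :: "nat list \<Rightarrow> (nat \<times> nat) set" where
  "filling R = (\<lambda>q. (R ! q, Suc q)) ` {..<length R}"

lemma mem_filling_iff: "(i, j) \<in> filling R \<longleftrightarrow> j \<in> {1..length R} \<and> i = R ! (j - 1)"
  unfolding filling_def by (cases j) auto

lemma filling_transversal:
  assumes Fe: "ferrers n lam" and R: "R \<in> fitting_perms lam n"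
  shows "transversal n lam (filling R)"
  unfolding transversal_def
proof (intro conjI ballI)
  have Rp: "length R = n" "distinct R" "set R = {1..n}" "\<forall>q<n. q < lam (R ! q)"
    using R unfolding fitting_perms_def by auto
  show "filling R \<subseteq> cells n lam"
  proof
    fix p assume "p \<in> filling R"
    then obtain q where q: "q < n" "p = (R ! q, Suc q)"
      using Rp(1) unfolding filling_def by auto
    then have "R ! q \<in> {1..n}"
      using Rp(1,3) by (metis nth_mem)
    then show "p \<in> cells n lam"
      using q Rp(4) unfolding cells_def by auto
  qed
  show "\<exists>!j. (i, j) \<in> filling R" if "i \<in> {1..n}" for i
  proof -
    have "i \<in> set R"
      using that Rp(3) by simp
    then obtain q where q: "q < n" "R ! q = i"
      using Rp(1) by (auto simp: in_set_conv_nth)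
    show ?thesis
    proof (rule ex1I)
      show "(i, Suc q) \<in> filling R"
        using q Rp(1) by (simp add: mem_filling_iff)
      fix j assume "(i, j) \<in> filling R"
      then have "j \<in> {1..n}" "R ! (j - 1) = R ! q"
        using q Rp(1) by (auto simp: mem_filling_iff)
      then show "j = Suc q"
        using q(1) Rp(1,2) nth_eq_iff_index_eq by fastforce
    qed
  qed
  show "\<exists>!i. (i, j) \<in> filling R" if "j \<in> {1..lam 1}" for j
    using that Fe Rp(1) unfolding ferrers_def by (simp add: mem_filling_iff)
qed

lemma transversal_cell:
  assumes Fe: "ferrers n lam" and T: "transversal n lam T" and ij: "(i, j) \<in> T"
  shows "i \<in> {1..n} \<and> j \<in> {1..n} \<and> j \<le> lam i"
proof -
  have "i \<in> {1..n}" "1 \<le> j" "j \<le> lam i"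
    using ij T unfolding transversal_def cells_def by auto
  moreover have "lam i \<le> lam 1"
    using \<open>i \<in> {1..n}\<close> ferrers_antimono_on[OF Fe] by (auto intro: monotone_onD)
  ultimately show ?thesis
    using Fe unfolding ferrers_def by auto
qed

lemma transversal_eq_filling:
  assumes Fe: "ferrers n lam" and T: "transversal n lam T"
    and len: "length R = n" and in_T: "\<And>q. q < n \<Longrightarrow> (R ! q, Suc q) \<in> T"
  shows "T = filling R"
proof (intro set_eqI iffI)
  have cols: "\<forall>j\<in>{1..n}. \<exists>!i. (i, j) \<in> T"
    using T Fe unfolding transversal_def ferrers_def by auto
  have in_col: "(R ! (j - 1), j) \<in> T" if "j \<in> {1..n}" for j
  proof -
    have "j - 1 < n" "Suc (j - 1) = j"
      using that by auto
    then show ?thesis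
      using in_T[of "j - 1"] by simp
  qed
  fix p
  show "p \<in> filling R" if "p \<in> T"
  proof -
    obtain i j where p: "p = (i, j)"
      by fastforce
    then have "j \<in> {1..n}" "(i, j) \<in> T"
      using that transversal_cell[OF Fe T] by auto
    then have "i = R ! (j - 1)"
      using cols in_col by blast
    then show ?thesis
      using p len \<open>j \<in> {1..n}\<close> by (simp add: mem_filling_iff)
  qed
  show "p \<in> T" if "p \<in> filling R"
    using that in_col len by (cases p) (auto simp: mem_filling_iff)
qed

lemma fitting_perms_of_transversal:
  assumes Fe: "ferrers n lam" and T: "transversal n lam T"
    and len: "length R = n" and in_T: "\<And>q. q < n \<Longrightarrow> (R ! q, Suc q) \<in> T"
  shows "R \<in> fitting_perms lam n"
  unfolding fitting_perms_def
proof (intro CollectI conjI allI impI)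
  have rows: "\<forall>i\<in>{1..n}. \<exists>!j. (i, j) \<in> T"
    using T unfolding transversal_def by auto
  note cell = transversal_cell[OF Fe T]
  show "distinct R"
    unfolding distinct_conv_nth
  proof (intro allI impI)
    fix a b assume "a < length R" "b < length R" "a \<noteq> b"
    then show "R ! a \<noteq> R ! b"
      using in_T[of a] in_T[of b] rows cell len by (metis Suc_inject)
  qed
  show "set R = {1..n}"
  proof
    show "set R \<subseteq> {1..n}"
    proof
      fix i assume "i \<in> set R"
      then obtain q where "q < n" "i = R ! q"
        using len by (auto simp: in_set_conv_nth)
      then show "i \<in> {1..n}"
        using cell[OF in_T] by blast
    qed
    show "{1..n} \<subseteq> set R"
    proof
      fix i assume "i \<in> {1..n}"
      then obtain j where "(i, j) \<in> T"
        using rows by blast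
      then have "j - 1 < length R" "i = R ! (j - 1)"
        using transversal_eq_filling[OF Fe T len in_T] len by (auto simp: mem_filling_iff)
      then show "i \<in> set R"
        by simp
    qed
  qed
  show "q < lam (R ! q)" if "q < n" for q
    using cell[OF in_T[OF that]] by simp
qed (rule len)

lemma transversalE:
  assumes Fe: "ferrers n lam" and T: "transversal n lam T"
  obtains R where "R \<in> fitting_perms lam n" "T = filling R"
proof -
  have cols: "\<forall>j\<in>{1..n}. \<exists>!i. (i, j) \<in> T"
    using T Fe unfolding transversal_def ferrers_def by auto
  define R where "R = map (\<lambda>q. THE i. (i, Suc q) \<in> T) [0..<n]"
  have len: "length R = n"
    unfolding R_def by simp
  have in_T: "(R ! q, Suc q) \<in> T" if "q < n" for q
    using that theI'[OF cols[rule_format, of "Suc q"]] unfolding R_def by simp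
  show ?thesis
    using that fitting_perms_of_transversal[OF Fe T len in_T] transversal_eq_filling[OF Fe T len in_T]
    by blast
qed

lemma inj_filling: "inj filling"
proof (rule injI)
  fix R R' assume eq: "filling R = filling R'"
  have sub: "length R \<le> length R2 \<and> (\<forall>q<length R. R ! q = R2 ! q)" if "filling R = filling R2" for R R2
  proof -
    have entry: "Suc q \<le> length R2 \<and> R ! q = R2 ! q" if "q < length R" for q
    proof -
      have "(R ! q, Suc q) \<in> filling R"
        using that by (simp add: mem_filling_iff)
      then show ?thesis
        using \<open>filling R = filling R2\<close> by (simp add: mem_filling_iff)
    qed
    moreover have "length R \<le> length R2"
    proof (cases "length R")
      case (Suc k)
      then show ?thesis
        using entry[of k] by simp
    qed simp
    ultimately show ?thesis
      by blast
  qed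
  show "R = R'"
    using sub[OF eq] sub[OF eq[symmetric]] by (auto intro: nth_equalityI)
qed

lemma card_transversals_eq:
  assumes Fe: "ferrers n lam" and PQ: "\<And>R. R \<in> fitting_perms lam n \<Longrightarrow> P (filling R) \<longleftrightarrow> Q R"
  shows "card {T. transversal n lam T \<and> P T} = card {R \<in> fitting_perms lam n. Q R}"
proof -
  have "{T. transversal n lam T \<and> P T} = filling ` {R \<in> fitting_perms lam n. Q R}"
  proof
    show "{T. transversal n lam T \<and> P T} \<subseteq> filling ` {R \<in> fitting_perms lam n. Q R}"
    proof
      fix T assume "T \<in> {T. transversal n lam T \<and> P T}"
      then have T: "transversal n lam T" "P T"
        by simp_all
      obtain R where "R \<in> fitting_perms lam n" "T = filling R"
        using transversalE[OF Fe T(1)] .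
      then show "T \<in> filling ` {R \<in> fitting_perms lam n. Q R}"
        using PQ T(2) by blast
    qed
    show "filling ` {R \<in> fitting_perms lam n. Q R} \<subseteq> {T. transversal n lam T \<and> P T}"
      using filling_transversal[OF Fe] PQ by blast
  qed
  moreover have "inj_on filling {R \<in> fitting_perms lam n. Q R}"
    using inj_filling by (rule inj_on_subset) simp
  ultimately show ?thesis
    by (simp add: card_image)
qed

lemma occ_of_occurs_with:
  assumes ord: "ord \<in> {(<), (>)}" and R: "R \<in> fitting_perms lam n"
    and O: "occurs_with n lam (filling R) 3 \<sigma>" and \<sigma>: "\<sigma> ` {1..3} \<subseteq> {1..3}"
    and ord_\<sigma>: "ord (\<sigma> 2) (\<sigma> 3)"
  shows "occ ord lam R"
proof -
  obtain r c where r: "strict_mono_on {1..3} r" and c: "strict_mono_on {1..3} c"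
    and cells: "\<forall>a\<in>{1..3}. \<forall>b\<in>{1..3}. (r a, c b) \<in> cells n lam"
    and ones: "\<forall>b\<in>{1..3}. (r (\<sigma> b), c b) \<in> filling R"
    using O unfolding occurs_with_def by blast
  have len: "length R = n"
    using R unfolding fitting_perms_def by simp
  have col: "c b \<in> {1..n} \<and> R ! (c b - 1) = r (\<sigma> b)" if "b \<in> {1..3}" for b
    using ones that len by (auto simp: mem_filling_iff)
  have "c 1 < c 2" "c 2 < c 3"
    using c unfolding strict_mono_on_def by simp_all
  then have ijl: "c 1 - 1 < c 2 - 1" "c 2 - 1 < c 3 - 1" "c 3 - 1 < n"
    using col[of 1] col[of 3] by auto
  have "c 3 - 1 < lam (r (\<sigma> b))" if "b \<in> {1..3}" for b
  proof -
    have "\<sigma> b \<in> {1..3}" "(3::nat) \<in> {1..3}"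
      using \<sigma> that by (blast, simp)
    then have "(r (\<sigma> b), c 3) \<in> cells n lam"
      using cells by blast
    then show ?thesis
      using col[of 3] unfolding cells_def by auto
  qed
  moreover have "ord (r (\<sigma> 2)) (r (\<sigma> 3))"
  proof -
    have \<sigma>23: "\<sigma> 2 \<in> {1..3}" "\<sigma> 3 \<in> {1..3}"
      using \<sigma> by (auto simp: image_subset_iff)
    from ord consider "ord = (<)" | "ord = (>)"
      by blast
    then show ?thesis
    proof cases
      case 1
      then show ?thesis
        using strict_mono_onD[OF r \<sigma>23] ord_\<sigma> by simp
    next
      case 2
      then show ?thesis
        using strict_mono_onD[OF r \<sigma>23(2,1)] ord_\<sigma> by simp
    qed
  qed
  ultimately show ?thesis
    unfolding occ_def using ijl col len by (intro exI[of _ "c 1 - 1"] exI[of _ "c 2 - 1"] exI[of _ "c 3 - 1"]) auto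
qed

lemma contains_perm_filling_intro:
  assumes R: "R \<in> fitting_perms lam n" and ijl: "i < j" "j < l" "l < n"
    and box: "l < lam (R ! i)" "l < lam (R ! j)" "l < lam (R ! l)"
    and xyz: "x < y" "y < z" "{x, y, z} = {R ! i, R ! j, R ! l}"
    and \<alpha>: "length \<alpha> = 3" "[x, y, z] ! (\<alpha> ! 0 - 1) = R ! i"
      "[x, y, z] ! (\<alpha> ! 1 - 1) = R ! j" "[x, y, z] ! (\<alpha> ! 2 - 1) = R ! l"
  shows "contains_perm n lam (filling R) \<alpha>"
proof -
  define r where "r a = [x, y, z] ! (a - 1)" for a
  define c where "c b = [Suc i, Suc j, Suc l] ! (b - 1)" for b
  have three: "{1..3::nat} = {1, 2, 3}"
    by auto
  have Rp: "length R = n" "set R = {1..n}"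
    using R unfolding fitting_perms_def by auto
  have row: "R ! k \<in> {1..n}" if "k < n" for k
    using that Rp by (metis nth_mem)
  have "strict_mono_on {1..3} r"
  proof (rule monotone_onI)
    fix a b :: nat assume "a \<in> {1..3}" "b \<in> {1..3}" "a < b"
    then show "r a < r b"
      using xyz(1,2) unfolding three r_def by auto
  qed
  moreover have "strict_mono_on {1..3} c"
  proof (rule monotone_onI)
    fix a b :: nat assume "a \<in> {1..3}" "b \<in> {1..3}" "a < b"
    then show "c a < c b"
      using ijl(1,2) unfolding three c_def by auto
  qed
  moreover have "(r a, c b) \<in> cells n lam" if "a \<in> {1..3}" "b \<in> {1..3}" for a b
  proof -
    have "r a \<in> {x, y, z}"
      using that unfolding three r_def by auto
    then have "r a \<in> {R ! i, R ! j, R ! l}"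
      using xyz(3) by simp
    then have "r a \<in> {1..n} \<and> l < lam (r a)"
      using row ijl box by auto
    moreover have "c b \<in> {1..Suc l}"
      using that ijl unfolding three c_def by auto
    ultimately show ?thesis
      unfolding cells_def by auto
  qed
  moreover have "(r (\<alpha> ! (b - 1)), c b) \<in> filling R" if "b \<in> {1..3}" for b
    using that \<alpha> ijl Rp(1) unfolding three r_def c_def by (auto simp: mem_filling_iff)
  ultimately show ?thesis
    unfolding contains_perm_def occurs_with_def \<alpha>(1) by blast
qed

definition perms3 :: "nat list set" where
  "perms3 = {[1, 2, 3], [1, 3, 2], [2, 1, 3], [2, 3, 1], [3, 1, 2], [3, 2, 1]}"

lemma contains_perm_of_triple:
  assumes R: "R \<in> fitting_perms lam n" and ijl: "i < j" "j < l" "l < n"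
    and box: "l < lam (R ! i)" "l < lam (R ! j)" "l < lam (R ! l)"
  shows "\<exists>\<alpha>\<in>perms3. (\<alpha> ! 1 < \<alpha> ! 2 \<longleftrightarrow> R ! j < R ! l) \<and> contains_perm n lam (filling R) \<alpha>"
proof -
  let ?a = "R ! i" and ?b = "R ! j" and ?c = "R ! l"
  have "distinct R" "length R = n"
    using R unfolding fitting_perms_def by auto
  then have "?a \<noteq> ?b" "?a \<noteq> ?c" "?b \<noteq> ?c"
    using ijl by (simp_all add: nth_eq_iff_index_eq)
  note intro = contains_perm_filling_intro[OF R ijl box]
  consider "?a < ?b" "?b < ?c" | "?a < ?c" "?c < ?b" | "?b < ?a" "?a < ?c"
    | "?b < ?c" "?c < ?a" | "?c < ?a" "?a < ?b" | "?c < ?b" "?b < ?a"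
    using \<open>?a \<noteq> ?b\<close> \<open>?a \<noteq> ?c\<close> \<open>?b \<noteq> ?c\<close> by linarith
  then show ?thesis
  proof cases
    case 1
    then show ?thesis
      using intro[of ?a ?b ?c "[1, 2, 3]"] unfolding perms3_def by auto
  next
    case 2
    then show ?thesis
      using intro[of ?a ?c ?b "[1, 3, 2]"] unfolding perms3_def by auto
  next
    case 3
    then show ?thesis
      using intro[of ?b ?a ?c "[2, 1, 3]"] unfolding perms3_def by auto
  next
    case 4
    then show ?thesis
      using intro[of ?b ?c ?a "[3, 1, 2]"] unfolding perms3_def by auto
  next
    case 5
    then show ?thesis
      using intro[of ?c ?a ?b "[2, 3, 1]"] unfolding perms3_def by auto
  next
    case 6
    then show ?thesis
      using intro[of ?c ?b ?a "[3, 2, 1]"] unfolding perms3_def by auto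
  qed
qed

lemma perms3_bij:
  assumes "\<alpha> \<in> perms3"
  shows "bij_betw (\<lambda>b. \<alpha> ! (b - 1)) {1..3} {1..3}"
proof -
  have three: "{1..3::nat} = {1, 2, 3}"
    by auto
  show ?thesis
    using assms unfolding perms3_def bij_betw_def inj_on_def three by auto
qed

lemma occ_iff_contains_perm:
  assumes ord: "ord \<in> {(<), (>)}" and R: "R \<in> fitting_perms lam n"
  shows "occ ord lam R \<longleftrightarrow> (\<exists>\<alpha>\<in>perms3. ord (\<alpha> ! 1) (\<alpha> ! 2) \<and> contains_perm n lam (filling R) \<alpha>)"
proof
  assume "occ ord lam R"
  then obtain i j l where ijl: "i < j" "j < l" "l < n" "ord (R ! j) (R ! l)"
    and box: "l < lam (R ! i)" "l < lam (R ! j)" "l < lam (R ! l)"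
    using R unfolding occ_def fitting_perms_def by auto
  obtain \<alpha> where \<alpha>: "\<alpha> \<in> perms3" "\<alpha> ! 1 < \<alpha> ! 2 \<longleftrightarrow> R ! j < R ! l"
    "contains_perm n lam (filling R) \<alpha>"
    using contains_perm_of_triple[OF R ijl(1-3) box] by blast
  have "\<alpha> ! 1 \<noteq> \<alpha> ! 2"
    using \<alpha>(1) unfolding perms3_def by auto
  then have "ord (\<alpha> ! 1) (\<alpha> ! 2)"
    using ord ijl(4) \<alpha>(2) by auto
  then show "\<exists>\<alpha>\<in>perms3. ord (\<alpha> ! 1) (\<alpha> ! 2) \<and> contains_perm n lam (filling R) \<alpha>"
    using \<alpha> by blast
next
  assume "\<exists>\<alpha>\<in>perms3. ord (\<alpha> ! 1) (\<alpha> ! 2) \<and> contains_perm n lam (filling R) \<alpha>"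
  then obtain \<alpha> where \<alpha>: "\<alpha> \<in> perms3" "ord (\<alpha> ! 1) (\<alpha> ! 2)" "contains_perm n lam (filling R) \<alpha>"
    by blast
  have "length \<alpha> = 3"
    using \<alpha>(1) unfolding perms3_def by auto
  then have "occurs_with n lam (filling R) 3 (\<lambda>b. \<alpha> ! (b - 1))"
    using \<alpha>(3) unfolding contains_perm_def by simp
  moreover have "(\<lambda>b. \<alpha> ! (b - 1)) ` {1..3} \<subseteq> {1..3}"
    using perms3_bij[OF \<alpha>(1)] by (simp add: bij_betw_def)
  ultimately show "occ ord lam R"
    using occ_of_occurs_with[OF ord R] \<alpha>(2) by simp
qed

lemma occ_iff_ex_occurs_with:
  assumes ord: "ord \<in> {(<), (>)}" and R: "R \<in> fitting_perms lam n"
  shows "occ ord lam R \<longleftrightarrow>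
           (\<exists>\<sigma>. bij_betw \<sigma> {1..3} {1..3} \<and> occurs_with n lam (filling R) 3 \<sigma> \<and> ord (\<sigma> 2) (\<sigma> 3))"
proof
  assume "occ ord lam R"
  then obtain \<alpha> where \<alpha>: "\<alpha> \<in> perms3" "ord (\<alpha> ! 1) (\<alpha> ! 2)" "contains_perm n lam (filling R) \<alpha>"
    using occ_iff_contains_perm[OF ord R] by blast
  have "length \<alpha> = 3"
    using \<alpha>(1) unfolding perms3_def by auto
  then show "\<exists>\<sigma>. bij_betw \<sigma> {1..3} {1..3} \<and> occurs_with n lam (filling R) 3 \<sigma> \<and> ord (\<sigma> 2) (\<sigma> 3)"
    using perms3_bij[OF \<alpha>(1)] \<alpha>(2,3) unfolding contains_perm_def
    by (intro exI[of _ "\<lambda>b. \<alpha> ! (b - 1)"]) simp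
next
  assume "\<exists>\<sigma>. bij_betw \<sigma> {1..3} {1..3} \<and> occurs_with n lam (filling R) 3 \<sigma> \<and> ord (\<sigma> 2) (\<sigma> 3)"
  then show "occ ord lam R"
    using occ_of_occurs_with[OF ord R] by (auto simp: bij_betw_def)
qed

lemma num_avoid_pop_eq_card_avoiders:
  assumes Fe: "ferrers n lam" and ord: "ord \<in> {(<), (>)}"
    and rel: "\<And>\<sigma>. (\<forall>j\<in>{1..3}. \<forall>j'\<in>{1..3}. rel j j' \<longrightarrow> \<sigma> j < \<sigma> j') \<longleftrightarrow> ord (\<sigma> 2) (\<sigma> 3)"
  shows "num_avoid_pop n lam 3 rel = card (avoiders ord lam n)"
  unfolding num_avoid_pop_def avoiders_def
  by (rule card_transversals_eq[OF Fe]) (simp only: contains_pop_def rel occ_iff_ex_occurs_with[OF ord])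

lemma num_avoid_perms_eq_card_avoiders:
  assumes Fe: "ferrers n lam" and ord: "ord \<in> {(<), (>)}"
    and S: "S = {\<alpha> \<in> perms3. ord (\<alpha> ! 1) (\<alpha> ! 2)}"
  shows "num_avoid_perms n lam S = card (avoiders ord lam n)"
  unfolding num_avoid_perms_def avoiders_def
  by (rule card_transversals_eq[OF Fe]) (auto simp: S occ_iff_contains_perm[OF ord])

theorem theorem1p6:
  shows "shape_wilf_pop 3 (\<lambda>j j'. j = 3 \<and> j' = 2) (\<lambda>j j'. j = 2 \<and> j' = 3)
       \<and> shape_wilf_perms {[1,3,2], [2,3,1], [3,2,1]} {[1,2,3], [2,1,3], [3,1,2]}"
proof -
  have desc: "{[1,3,2], [2,3,1], [3,2,1]} = {\<alpha> \<in> perms3. \<alpha> ! 2 < \<alpha> ! 1}"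
    and asc: "{[1,2,3], [2,1,3], [3,1,2]} = {\<alpha> \<in> perms3. \<alpha> ! 1 < \<alpha> ! 2}"
    unfolding perms3_def by auto
  have "num_avoid_pop n lam 3 (\<lambda>j j'. j = 3 \<and> j' = 2) = num_avoid_pop n lam 3 (\<lambda>j j'. j = 2 \<and> j' = 3)"
    and "num_avoid_perms n lam {[1,3,2], [2,3,1], [3,2,1]} = num_avoid_perms n lam {[1,2,3], [2,1,3], [3,1,2]}"
    if Fe: "ferrers n lam" for n lam
    using num_avoid_pop_eq_card_avoiders[OF Fe, of "(>)"] num_avoid_pop_eq_card_avoiders[OF Fe, of "(<)"]
      num_avoid_perms_eq_card_avoiders[OF Fe, of "(>)"] num_avoid_perms_eq_card_avoiders[OF Fe, of "(<)"]
      card_avoiders_desc_eq_asc[OF Fe] desc asc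
    by simp_all
  then show ?thesis
    unfolding shape_wilf_pop_def shape_wilf_perms_def by blast
qed

end
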